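(* Let $A=(a_{ij})\in\mathbb R^{d\times d}_+$ have entries summing to $1$ and positive row sums $r(A)_i=\sum_ja_{ij}$, and let $p\in\Sigma_d$. Define $\tilde A\in\mathbb R^{d\times d}_+$ by $\tilde A_{ij}=\frac1z a_{ij}\sqrt{p_i/r(A)_i}$, where $z>0$ is chosen so that the entries of $\tilde A$ sum to $1$. Then $\|c(\tilde A)-c(A)\|_1\le\|r(\tilde A)-r(A)\|_1$.
   Context: For a matrix $M$, $r(M)$ is its vector of row sums and $c(M)$ its vector of column sums; $\Sigma_d$ is the probability simplex in $\mathbb R^d$; $\|\cdot\|_1$ is the $\ell_1$ norm. *)

theory Defs
  imports Main "HOL-Analysis.Analysis"
begin

text \<open>Square d x d matrices are functions on a finite index type 'n (d = CARD('n)).\<close>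

definition row_sums :: "('n::finite \<Rightarrow> 'n \<Rightarrow> real) \<Rightarrow> 'n \<Rightarrow> real" where
  "row_sums M i = (\<Sum>j\<in>UNIV. M i j)"

definition col_sums :: "('n::finite \<Rightarrow> 'n \<Rightarrow> real) \<Rightarrow> 'n \<Rightarrow> real" where
  "col_sums M j = (\<Sum>i\<in>UNIV. M i j)"

definition l1_dist :: "('n::finite \<Rightarrow> real) \<Rightarrow> ('n \<Rightarrow> real) \<Rightarrow> real" where
  "l1_dist u v = (\<Sum>i\<in>UNIV. \<bar>u i - v i\<bar>)"

definition prob_simplex :: "('n::finite \<Rightarrow> real) set" where
  "prob_simplex = {p. (\<forall>i. p i \<ge> 0) \<and> (\<Sum>i\<in>UNIV. p i) = 1}"

end

theory Submission
  imports Defs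
begin

text \<open>The matrix \<open>At\<close> arises from \<open>A\<close> by rescaling each row by a scalar. Within a row
of a nonnegative matrix all entries then move in the same direction, so the row-sum
difference is the entrywise \<open>\<ell>\<^sub>1\<close> distance of the row, whereas the column-sum differences
can only lose mass by cancellation (triangle inequality).\<close>

lemma l1_dist_col_sums_le_entrywise:
  "l1_dist (col_sums B) (col_sums A) \<le> (\<Sum>i\<in>UNIV. \<Sum>j\<in>UNIV. \<bar>B i j - A i j\<bar>)"
proof -
  have "l1_dist (col_sums B) (col_sums A) = (\<Sum>j\<in>UNIV. \<bar>\<Sum>i\<in>UNIV. B i j - A i j\<bar>)"
    by (simp add: l1_dist_def col_sums_def sum_subtractf)
  also have "\<dots> \<le> (\<Sum>j\<in>UNIV. \<Sum>i\<in>UNIV. \<bar>B i j - A i j\<bar>)"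
    by (intro sum_mono sum_abs)
  also have "\<dots> = (\<Sum>i\<in>UNIV. \<Sum>j\<in>UNIV. \<bar>B i j - A i j\<bar>)"
    by (rule sum.swap)
  finally show ?thesis .
qed

lemma row_scaling_row_sums_diff:
  assumes nonneg: "\<And>j. A i j \<ge> 0"
    and scaled: "\<And>j. B i j = A i j * w"
  shows "(\<Sum>j\<in>UNIV. \<bar>B i j - A i j\<bar>) = \<bar>row_sums B i - row_sums A i\<bar>"
proof -
  have diff: "B i j - A i j = A i j * (w - 1)" for j
    by (simp add: scaled algebra_simps)
  have "(\<Sum>j\<in>UNIV. \<bar>B i j - A i j\<bar>) = row_sums A i * \<bar>w - 1\<bar>"
    by (simp add: diff abs_mult nonneg row_sums_def sum_distrib_right)
  also have "\<dots> = \<bar>row_sums A i * (w - 1)\<bar>"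
    using sum_nonneg[of UNIV "A i"] nonneg by (simp add: abs_mult row_sums_def)
  also have "row_sums A i * (w - 1) = row_sums B i - row_sums A i"
    by (simp add: row_sums_def sum_subtractf[symmetric] diff sum_distrib_right)
  finally show ?thesis .
qed

lemma l1_dist_col_sums_le_row_sums_row_scaling:
  assumes nonneg: "\<And>i j. A i j \<ge> 0"
    and scaled: "\<And>i j. B i j = A i j * w i"
  shows "l1_dist (col_sums B) (col_sums A) \<le> l1_dist (row_sums B) (row_sums A)"
proof -
  have rows: "(\<Sum>j\<in>UNIV. \<bar>B i j - A i j\<bar>) = \<bar>row_sums B i - row_sums A i\<bar>" for i
    using nonneg scaled by (rule row_scaling_row_sums_diff)
  have "l1_dist (col_sums B) (col_sums A) \<le> (\<Sum>i\<in>UNIV. \<Sum>j\<in>UNIV. \<bar>B i j - A i j\<bar>)"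
    by (rule l1_dist_col_sums_le_entrywise)
  also have "\<dots> = l1_dist (row_sums B) (row_sums A)"
    by (simp only: l1_dist_def rows)
  finally show ?thesis .
qed

theorem lemma6:
  fixes A :: "'n::finite \<Rightarrow> 'n \<Rightarrow> real" and p :: "'n \<Rightarrow> real" and z :: real
    and At :: "'n \<Rightarrow> 'n \<Rightarrow> real"
  assumes nonneg: "\<And>i j. A i j \<ge> 0"
    and total: "(\<Sum>i\<in>UNIV. \<Sum>j\<in>UNIV. A i j) = 1"
    and rpos: "\<And>i. row_sums A i > 0"
    and p: "p \<in> prob_simplex"
    and At_def: "\<And>i j. At i j = (1 / z) * A i j * sqrt (p i / row_sums A i)"
    and zpos: "z > 0"
    and znorm: "(\<Sum>i\<in>UNIV. \<Sum>j\<in>UNIV. At i j) = 1"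
  shows "l1_dist (col_sums At) (col_sums A) \<le> l1_dist (row_sums At) (row_sums A)"
proof (rule l1_dist_col_sums_le_row_sums_row_scaling[OF nonneg])
  show "At i j = A i j * ((1 / z) * sqrt (p i / row_sums A i))" for i j
    by (simp add: At_def)
qed

end
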